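(* Let $n\ge 1$ and let $\|\cdot\|_L$ be one of the vectorized norms $L_1,L_2,L_\infty$ on $\mathbb{R}^{n\times n}$. Let $M\subset\mathbb{R}^{n\times n}$ be a set containing an open ball $B(a,c)=\{x:\|x-a\|_L<c\}$ whose radius $c$ is large enough that $B(a,c)$ contains a singular matrix of rank $n-1$. Let $F:\mathbb{R}^{n\times n}\to\mathbb{R}^{n\times n}$ be any polynomial Lipschitz continuous function. Then for every $E>0$ there exists an invertible matrix $x\in M$ such that $$\|\mathrm{Inv}(x)-F(x)\|_L>E.$$
   Context: $\mathrm{Inv}(x)=x^{-1}$ denotes matrix inversion, defined on invertible matrices. For $A=(a_{ij})\in\mathbb{R}^{n\times n}$ the norms are vectorized: $\|A\|_{L_1}=\sum_{i,j}|a_{ij}|$, $\|A\|_{L_2}=(\sum_{i,j}|a_{ij}|^2)^{1/2}$, $\|A\|_{L_\infty}=\max_{i,j}|a_{ij}|$; $\mathbb{R}^{n\times n}$ is identified with $\mathbb{R}^{n^2}$. A function $f:\mathbb{R}^{n_1}\to\mathbb{R}^{n_2}$ is called polynomial Lipschitz continuous with respect to norms $\|\cdot\|_{L^+}$, $\|\cdot\|_{L^*}$ (chosen among $L_1,L_2,L_\infty$) if there exist a nonnegative integer $N$ and real polynomials $f_0,\dots,f_N$ in two variables such that for all $x,y$, $\|f(x)-f(y)\|_{L^*}\le \sum_{i=0}^{N} f_i(\|x\|_{L^+},\|y\|_{L^+})\|x-y\|_{L^+}^{i}$. *)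

theory Defs
  imports "HOL-Analysis.Analysis"
begin

datatype normkind = L1 | L2 | Linf

definition vnorm :: "normkind \<Rightarrow> real^'n::finite^'m::finite \<Rightarrow> real" where
  "vnorm k A = (case k of
      L1 \<Rightarrow> (\<Sum>i\<in>UNIV. \<Sum>j\<in>UNIV. \<bar>A $ i $ j\<bar>)
    | L2 \<Rightarrow> sqrt (\<Sum>i\<in>UNIV. \<Sum>j\<in>UNIV. \<bar>A $ i $ j\<bar>^2)
    | Linf \<Rightarrow> Max {\<bar>A $ i $ j\<bar> | i j. True})"

definition is_poly2 :: "(real \<Rightarrow> real \<Rightarrow> real) \<Rightarrow> bool" where
  "is_poly2 f \<longleftrightarrow> (\<exists>d::nat. \<exists>c::nat \<Rightarrow> nat \<Rightarrow> real.
      \<forall>s t. f s t = (\<Sum>i\<le>d. \<Sum>j\<le>d. c i j * s ^ i * t ^ j))"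

definition poly_lipschitz ::
  "normkind \<Rightarrow> normkind \<Rightarrow> (real^'n::finite^'n \<Rightarrow> real^'m::finite^'m) \<Rightarrow> bool" where
  "poly_lipschitz kp ks f \<longleftrightarrow> (\<exists>N::nat. \<exists>fs::nat \<Rightarrow> real \<Rightarrow> real \<Rightarrow> real.
      (\<forall>i\<le>N. is_poly2 (fs i)) \<and>
      (\<forall>x y. vnorm ks (f x - f y) \<le>
         (\<Sum>i\<le>N. fs i (vnorm kp x) (vnorm kp y) * vnorm kp (x - y) ^ i)))"

end

theory Submission
  imports Defs
begin

(*
  Let y be a matrix of rank n - 1 in the ball, with y v = 0 for some v ~= 0 and w outside the range
  of y. Then y + t w v^T is invertible for every t ~= 0, so invertible matrices approach y. For
  any invertible x we have v = x^-1 (x - y) v, hence 1 <= |x^-1| |x - y| in operator norm, and the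
  inverses blow up near y. A polynomially Lipschitz F, on the other hand, is bounded on bounded
  sets. All vectorized norms and the operator norm agree up to the factor n^2, so the choice of
  norms does not matter.
*)

lemma vnorm_L1_eq_sum: "vnorm L1 A = (\<Sum>i\<in>UNIV. \<Sum>j\<in>UNIV. \<bar>A $ i $ j\<bar>)"
  by (simp add: vnorm_def)

lemma vnorm_L2_eq_norm: "vnorm L2 A = norm A"
  unfolding vnorm_def norm_vec_def L2_set_def
  by (simp add: sum_nonneg)

lemma vnorm_Linf_eq_Max: "vnorm Linf A = (MAX (i, j). \<bar>A $ i $ j\<bar>)"
  unfolding vnorm_def by (simp add: image_def)

lemma abs_entry_le_vnorm: "\<bar>A $ i $ j\<bar> \<le> vnorm k A"
proof (cases k)
  case L1
  have "\<bar>A $ i $ j\<bar> \<le> (\<Sum>j\<in>UNIV. \<bar>A $ i $ j\<bar>)"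
    by (rule member_le_sum) auto
  also have "\<dots> \<le> (\<Sum>i\<in>UNIV. \<Sum>j\<in>UNIV. \<bar>A $ i $ j\<bar>)"
    by (rule member_le_sum) (auto intro: sum_nonneg)
  finally show ?thesis by (simp add: L1 vnorm_L1_eq_sum)
next
  case L2
  have "\<bar>A $ i $ j\<bar> \<le> norm (A $ i)" by (rule component_le_norm_cart)
  also have "\<dots> \<le> norm A" by (rule Finite_Cartesian_Product.norm_nth_le)
  finally show ?thesis by (simp add: L2 vnorm_L2_eq_norm)
next
  case Linf
  then show ?thesis by (auto simp: vnorm_Linf_eq_Max Max_ge_iff)
qed

lemma vnorm_nonneg: "0 \<le> vnorm k A"
  using abs_entry_le_vnorm [of A undefined undefined k] by linarith

lemma vnorm_zero [simp]: "vnorm k 0 = 0"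
  by (cases k) (simp_all add: vnorm_def)

lemma vnorm_L1_scaleR: "vnorm L1 (c *\<^sub>R A) = \<bar>c\<bar> * vnorm L1 A"
  by (simp add: vnorm_L1_eq_sum abs_mult sum_distrib_left)

lemma vnorm_le_vnorm_L1: "vnorm k A \<le> vnorm L1 A"
proof (cases k)
  case L1
  then show ?thesis by simp
next
  case L2
  have "norm A \<le> (\<Sum>i\<in>UNIV. norm (A $ i))"
    unfolding norm_vec_def by (rule L2_set_le_sum) simp
  also have "\<dots> \<le> (\<Sum>i\<in>UNIV. \<Sum>j\<in>UNIV. \<bar>A $ i $ j\<bar>)"
    by (intro sum_mono norm_le_l1_cart)
  finally show ?thesis by (simp add: L2 vnorm_L2_eq_norm vnorm_L1_eq_sum)
next
  case Linf
  have "\<bar>A $ i $ j\<bar> \<le> vnorm L1 A" for i j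
    by (rule abs_entry_le_vnorm)
  then show ?thesis by (simp add: Linf vnorm_Linf_eq_Max)
qed

lemma vnorm_L1_le_vnorm:
  fixes A :: "real^'n::finite^'m::finite"
  shows "vnorm L1 A \<le> real (CARD('m) * CARD('n)) * vnorm k A"
proof -
  have "vnorm L1 A \<le> (\<Sum>i\<in>(UNIV::'m set). \<Sum>j\<in>(UNIV::'n set). vnorm k A)"
    unfolding vnorm_L1_eq_sum by (intro sum_mono abs_entry_le_vnorm)
  then show ?thesis by simp
qed

lemma vnorm_le_vnorm:
  fixes A :: "real^'n::finite^'m::finite"
  shows "vnorm k A \<le> real (CARD('m) * CARD('n)) * vnorm k' A"
  using vnorm_le_vnorm_L1 [of k A] vnorm_L1_le_vnorm [of A k'] by linarith

lemma vnorm_triangle: "vnorm k (A + B) \<le> vnorm k A + vnorm k B"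
proof (cases k)
  case L1
  then show ?thesis
    by (simp add: vnorm_L1_eq_sum sum.distrib [symmetric] sum_mono abs_triangle_ineq)
next
  case L2
  then show ?thesis by (simp add: vnorm_L2_eq_norm norm_triangle_ineq)
next
  case Linf
  have "\<bar>(A + B) $ i $ j\<bar> \<le> vnorm k A + vnorm k B" for i j
    using abs_entry_le_vnorm [of A i j k] abs_entry_le_vnorm [of B i j k] by simp
  then show ?thesis by (simp add: Linf vnorm_Linf_eq_Max)
qed

lemma onorm_le_vnorm:
  fixes A :: "real^'n::finite^'m::finite"
  shows "onorm ((*v) A) \<le> real (CARD('m) * CARD('n)) * vnorm k A"
  using onorm_le_matrix_component_sum [of A] vnorm_L1_le_vnorm [of A k]
  by (simp add: vnorm_L1_eq_sum)

lemma is_poly2_continuous_on: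
  assumes "is_poly2 f" "continuous_on S g" "continuous_on S h"
  shows "continuous_on S (\<lambda>x. f (g x) (h x))"
proof -
  obtain d c where f: "\<And>s t. f s t = (\<Sum>i\<le>d. \<Sum>j\<le>d. c i j * s ^ i * t ^ j)"
    using assms(1) unfolding is_poly2_def by blast
  show ?thesis
    unfolding f by (intro continuous_intros assms(2,3))
qed

lemma poly_lipschitz_bounded:
  fixes f :: "real^'n::finite^'n \<Rightarrow> real^'m::finite^'m"
  assumes "poly_lipschitz kp ks f"
  obtains G where "\<And>x. vnorm kp x \<le> R \<Longrightarrow> vnorm ks (f x) \<le> G"
proof -
  obtain N fs where polys: "\<forall>i\<le>N. is_poly2 (fs i)"
    and lip: "\<And>x y :: real^'n^'n. vnorm ks (f x - f y) \<le>
      (\<Sum>i\<le>N. fs i (vnorm kp x) (vnorm kp y) * vnorm kp (x - y) ^ i)"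
    using assms unfolding poly_lipschitz_def by blast
  define g where "g s = (\<Sum>i\<le>N. fs i s 0 * s ^ i)" for s
  have "continuous_on {0..R} (\<lambda>s. fs i s 0)" if "i \<le> N" for i
    using is_poly2_continuous_on [of "fs i" "{0..R}" "\<lambda>s. s" "\<lambda>s. 0"] polys that
    by (simp add: continuous_on_id continuous_on_const)
  then have "continuous_on {0..R} g"
    unfolding g_def by (intro continuous_intros) auto
  then have "bounded (g ` {0..R})"
    by (intro compact_imp_bounded compact_continuous_image compact_Icc)
  then obtain K where K: "\<And>s. s \<in> {0..R} \<Longrightarrow> \<bar>g s\<bar> \<le> K"
    unfolding bounded_iff by (auto simp del: atLeastAtMost_iff)
  show ?thesis
  proof
    fix x :: "real^'n^'n" assume "vnorm kp x \<le> R"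
    then have "g (vnorm kp x) \<le> K"
      using K [of "vnorm kp x"] vnorm_nonneg [of kp x] by auto
    moreover have "vnorm ks (f x - f 0) \<le> g (vnorm kp x)"
      using lip [of x 0] by (simp add: g_def)
    moreover have "vnorm ks (f x) \<le> vnorm ks (f x - f 0) + vnorm ks (f 0)"
      using vnorm_triangle [of ks "f x - f 0" "f 0"] by simp
    ultimately show "vnorm ks (f x) \<le> K + vnorm ks (f 0)"
      by linarith
  qed
qed

lemma dim_null_space_add_rank:
  fixes A :: "real^'n::finite^'m::finite"
  shows "dim {x. A *v x = 0} + rank A = CARD('n)"
proof -
  have "{x. A *v x = 0} = {x \<in> UNIV. \<forall>r \<in> span (rows A). orthogonal r x}"
  proof (intro set_eqI iffI)
    fix x assume "x \<in> {x. A *v x = 0}"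
    then show "x \<in> {x \<in> UNIV. \<forall>r \<in> span (rows A). orthogonal r x}"
      using orthogonal_nullspace_rowspace [of A x] by (auto simp: orthogonal_commute)
  next
    fix x assume x: "x \<in> {x \<in> UNIV. \<forall>r \<in> span (rows A). orthogonal r x}"
    have "(A *v x) $ i = 0" for i
      using x span_base [of "row i A" "rows A"]
      by (auto simp: rows_def orthogonal_def matrix_vector_mul_component row_def vec_lambda_eta)
    then show "x \<in> {x. A *v x = 0}" by (simp add: vec_eq_iff)
  qed
  moreover have "dim {x \<in> UNIV. \<forall>r \<in> span (rows A). orthogonal r x} + dim (span (rows A))
      = dim (UNIV :: (real^'n) set)"
    by (rule dim_subspace_orthogonal_to_vectors) auto
  ultimately show ?thesis by (simp add: row_rank_def)
qed

lemma null_space_corank_one: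
  fixes A :: "real^'n::finite^'m::finite"
  assumes "rank A = CARD('n) - 1" "A *v v = 0" "v \<noteq> 0" "A *v z = 0"
  shows "z \<in> span {v}"
proof -
  have "0 < CARD('n)" by simp
  then have "dim {x. A *v x = 0} = 1"
    using dim_null_space_add_rank [of A] assms(1) by linarith
  then have "dim {x. A *v x = 0} \<le> dim {v}"
    using assms(3) by (simp add: dim_eq_card_independent independent_insert)
  then have "span {v} = span {x. A *v x = 0}"
    using assms(2) by (intro dim_eq_span) auto
  then show ?thesis
    using assms(4) span_base [of z "{x. A *v x = 0}"] by simp
qed

lemma invertible_iff_null_space_trivial:
  fixes A :: "real^'n::finite^'n"
  shows "invertible A \<longleftrightarrow> (\<forall>x. A *v x = 0 \<longrightarrow> x = 0)"
  by (simp add: invertible_left_inverse matrix_left_invertible_ker)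

lemma not_invertible_if_rank_less:
  fixes y :: "real^'n::finite^'n"
  assumes "rank y < CARD('n)"
  shows "\<not> invertible y"
  using assms matrix_nonfull_linear_equations_eq [of y]
  by (auto simp: invertible_iff_null_space_trivial)

lemma corank_one_perturbation_invertible:
  fixes y :: "real^'n::finite^'n"
  assumes rank: "rank y = CARD('n) - 1"
  obtains B where "\<And>t. t \<noteq> 0 \<Longrightarrow> invertible (y + t *\<^sub>R B)"
proof -
  have "0 < CARD('n)" by simp
  then have "rank y \<noteq> CARD('n)" using rank by linarith
  then obtain v where v: "v \<noteq> 0" "y *v v = 0"
    using matrix_nonfull_linear_equations_eq [of y] by blast
  obtain w where w: "w \<notin> range ((*v) y)"
    using full_rank_surjective [of y] \<open>rank y \<noteq> CARD('n)\<close> by blast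
  define B :: "real^'n^'n" where "B = (\<chi> i j. w $ i * v $ j)"
  have B: "(y + t *\<^sub>R B) *v z = y *v z + (t * (v \<bullet> z)) *\<^sub>R w" for t z
    by (simp add: B_def vec_eq_iff matrix_vector_mult_def inner_vec_def algebra_simps
        sum.distrib sum_distrib_left sum_distrib_right)
  show ?thesis
  proof
    fix t :: real assume "t \<noteq> 0"
    show "invertible (y + t *\<^sub>R B)"
      unfolding invertible_iff_null_space_trivial
    proof (intro allI impI)
      fix z assume z: "(y + t *\<^sub>R B) *v z = 0"
      have "v \<bullet> z = 0"
      proof (rule ccontr)
        assume "v \<bullet> z \<noteq> 0"
        have "y *v ((- 1 / (t * (v \<bullet> z))) *\<^sub>R z) = (- 1 / (t * (v \<bullet> z))) *\<^sub>R (y *v z)"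
          by (rule matrix_vector_mult_scaleR)
        also have "y *v z = - ((t * (v \<bullet> z)) *\<^sub>R w)"
          using z by (simp add: B add_eq_0_iff)
        finally have "w = y *v ((- 1 / (t * (v \<bullet> z))) *\<^sub>R z)"
          using \<open>v \<bullet> z \<noteq> 0\<close> \<open>t \<noteq> 0\<close> by simp
        with w show False by blast
      qed
      with z have "y *v z = 0" by (simp add: B)
      then obtain s where s: "z = s *\<^sub>R v"
        using null_space_corank_one [OF rank v(2,1)] by (auto simp: span_singleton)
      with \<open>v \<bullet> z = 0\<close> v(1) show "z = 0" by simp
    qed
  qed
qed

lemma matrix_inv_mult_left:
  fixes A :: "'a::field^'n::finite^'n"
  assumes "invertible A"
  shows "matrix_inv A ** A = mat 1"
  using assms unfolding invertible_def matrix_inv_def by (rule someI2_ex) auto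

lemma onorm_matrix_inv_ge:
  fixes x y :: "real^'n::finite^'n"
  assumes "invertible x" "\<not> invertible y"
  shows "1 \<le> onorm ((*v) (matrix_inv x)) * onorm ((*v) (x - y))"
proof -
  obtain v where v: "v \<noteq> 0" "y *v v = 0"
    using assms(2) by (auto simp: invertible_iff_null_space_trivial)
  have "v = matrix_inv x *v ((x - y) *v v)"
    using v(2) matrix_inv_mult_left [OF assms(1)]
    by (simp add: matrix_vector_mult_diff_rdistrib matrix_vector_mul_assoc)
  then have "norm v \<le> onorm ((*v) (matrix_inv x)) * norm ((x - y) *v v)"
    by (metis onorm matrix_vector_mul_bounded_linear)
  also have "\<dots> \<le> onorm ((*v) (matrix_inv x)) * (onorm ((*v) (x - y)) * norm v)"
    by (intro mult_left_mono onorm onorm_pos_le) simp_all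
  finally show ?thesis
    using v(1) by (simp add: mult.assoc [symmetric])
qed

lemma vnorm_matrix_inv_ge:
  fixes x y :: "real^'n::finite^'n"
  assumes "invertible x" "\<not> invertible y"
  shows "1 \<le> real (CARD('n) * CARD('n)) ^ 2 * vnorm k (matrix_inv x) * vnorm k (x - y)"
proof -
  define C where "C = real (CARD('n) * CARD('n))"
  have "1 \<le> onorm ((*v) (matrix_inv x)) * onorm ((*v) (x - y))"
    using assms by (rule onorm_matrix_inv_ge)
  also have "\<dots> \<le> (C * vnorm k (matrix_inv x)) * (C * vnorm k (x - y))"
    unfolding C_def by (intro mult_mono onorm_le_vnorm onorm_pos_le) (simp_all add: vnorm_nonneg)
  finally show ?thesis
    by (simp add: C_def power2_eq_square mult_ac)
qed

lemma matrix_inv_unbounded_near_corank_one: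
  fixes y :: "real^'n::finite^'n"
  assumes rank: "rank y = CARD('n) - 1" and "e > 0"
  obtains x where "invertible x" "vnorm k (x - y) < e" "K < vnorm k (matrix_inv x)"
proof -
  define C where "C = real (CARD('n) * CARD('n)) ^ 2"
  have "C > 0" by (simp add: C_def)
  obtain B where B: "\<And>t. t \<noteq> 0 \<Longrightarrow> invertible (y + t *\<^sub>R B)"
    using corank_one_perturbation_invertible [OF rank] by blast
  define d where "d = min e (1 / (C * (\<bar>K\<bar> + 1)))"
  have "d > 0" using \<open>e > 0\<close> \<open>C > 0\<close> by (simp add: d_def)
  define t where "t = d / (vnorm L1 B + 1)"
  have "t > 0" using \<open>d > 0\<close> vnorm_nonneg [of L1 B] by (simp add: t_def)
  define x where "x = y + t *\<^sub>R B"
  have "vnorm k (x - y) \<le> t * vnorm L1 B"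
    using vnorm_le_vnorm_L1 [of k "t *\<^sub>R B"] \<open>t > 0\<close> by (simp add: x_def vnorm_L1_scaleR)
  also have "\<dots> < d"
    using \<open>d > 0\<close> vnorm_nonneg [of L1 B] by (simp add: t_def field_simps)
  finally have close: "vnorm k (x - y) < d" .
  have inv: "invertible x" using B \<open>t > 0\<close> by (simp add: x_def)
  have sing: "\<not> invertible y"
    using rank by (intro not_invertible_if_rank_less) simp
  have "vnorm k (x - y) < 1 / (C * (\<bar>K\<bar> + 1))"
    using close by (simp add: d_def)
  then have "C * vnorm k (x - y) * (\<bar>K\<bar> + 1) < 1"
    using \<open>C > 0\<close> by (simp add: pos_less_divide_eq mult_ac)
  also have "1 \<le> C * vnorm k (x - y) * vnorm k (matrix_inv x)"
    using vnorm_matrix_inv_ge [OF inv sing] by (simp add: C_def mult_ac)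
  finally have "\<bar>K\<bar> + 1 < vnorm k (matrix_inv x)"
    using \<open>C > 0\<close> vnorm_nonneg [of k "x - y"] by (auto dest: mult_left_less_imp_less)
  then show ?thesis
    using that inv close by (simp add: d_def)
qed

theorem theorem3p7:
  fixes M :: "(real^'n::finite^'n) set"
    and a :: "real^'n^'n" and c :: real
    and F :: "real^'n^'n \<Rightarrow> real^'n^'n"
    and L Lp Ls :: normkind
  assumes ball_sub: "{x. vnorm L (x - a) < c} \<subseteq> M"
    and rank_in_ball: "\<exists>y. vnorm L (y - a) < c \<and> \<not> invertible y \<and> rank y = CARD('n) - 1"
    and F_pl: "poly_lipschitz Lp Ls F"
  shows "\<forall>E>0. \<exists>x\<in>M. invertible x \<and> vnorm L (matrix_inv x - F x) > E"
proof (intro allI impI)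
  fix E :: real assume "E > 0"
  obtain y where y: "vnorm L (y - a) < c" and rank: "rank y = CARD('n) - 1"
    using rank_in_ball by blast
  define C where "C = real (CARD('n) * CARD('n))"
  define \<delta> where "\<delta> = c - vnorm L (y - a)"
  obtain G where G: "\<And>x. vnorm Lp x \<le> C * (vnorm L y + \<delta>) \<Longrightarrow> vnorm Ls (F x) \<le> G"
    using poly_lipschitz_bounded [OF F_pl] by blast
  have "\<delta> > 0" using y by (simp add: \<delta>_def)
  then obtain x where inv: "invertible x" and close: "vnorm L (x - y) < \<delta>"
    and large: "E + C * G < vnorm L (matrix_inv x)"
    using matrix_inv_unbounded_near_corank_one [OF rank, where k = L and K = "E + C * G"] by blast
  have "vnorm L (x - a) < c"
    using vnorm_triangle [of L "x - y" "y - a"] close by (simp add: \<delta>_def)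
  with ball_sub have "x \<in> M" by blast
  have "vnorm L x \<le> vnorm L y + \<delta>"
    using vnorm_triangle [of L "x - y" y] close by simp
  then have "vnorm Lp x \<le> C * (vnorm L y + \<delta>)"
    using vnorm_le_vnorm [of Lp x L] by (simp add: C_def order_trans mult_left_mono)
  then have "vnorm L (F x) \<le> C * G"
    using G vnorm_le_vnorm [of L "F x" Ls] by (simp add: C_def order_trans mult_left_mono)
  moreover have "vnorm L (matrix_inv x) \<le> vnorm L (matrix_inv x - F x) + vnorm L (F x)"
    using vnorm_triangle [of L "matrix_inv x - F x" "F x"] by simp
  ultimately show "\<exists>x\<in>M. invertible x \<and> vnorm L (matrix_inv x - F x) > E"
    using \<open>x \<in> M\<close> inv large by force
qed

end
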